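(* For $z>0$, \begin{equation*} G_{N+1,1}^{0,N+1} \left(z \Big| \begin{matrix} 1, 1/2, \ldots, 1/2 \\ 0 \end{matrix} \right) = \pi^{\frac{N}{2}} - \sum_{k=0}^{\infty} z^{-1/2-k} \sum_{j=0}^{N-1} H_{kj} \cdot \left[\log z\right]^j \end{equation*} with \begin{equation*} H_{kj} \coloneqq \frac{(-1)^{Nk}}{j!} \, \sum_{n=j}^{N-1} \left(\frac{1}{2}+k\right)^{-(n-j+1)} \sum_{j_1+\ldots+j_N=N-1-n} \ \prod_{t=1}^N \left\{\sum_{\ell_1+\ldots+\ell_{k+1}=j_t} \frac{\Gamma^{(\ell_{k+1})}(1)}{\ell_{k+1}!} \left\{\prod_{i=1}^{k-1} \left(k-i+1\right)^{-(\ell_i+1)}\right\}\right\}, \end{equation*} where $j_i \in \mathbb{N}_0$ and $\ell_i\in \mathbb{N}_0$.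
   Context: $N \in \mathbb{N}$; $\log$ denotes the natural logarithm; $\Gamma^{(\ell)}$ denotes the $\ell$-th derivative of the Gamma function. $G_{p,q}^{m,n}\left(z \Big| \begin{matrix} a_1,\ldots, a_p \\ b_1,\ldots, b_q\end{matrix}\right)$ is the Meijer G-function, defined by the contour integral $\frac{1}{2\pi \mathrm{i}} \int_{\mathcal{L}} \frac{\prod_{j=1}^m \Gamma(b_j+s) \prod_{i=1}^n \Gamma(1-a_i-s)}{\prod_{i=n+1}^p \Gamma(a_i+s) \prod_{j=m+1}^q \Gamma(1-b_j-s)} z^{-s} \, \mathrm{d} s$ over a contour $\mathcal{L}$ separating the poles of the $\Gamma(b_j+s)$ from those of the $\Gamma(1-a_i-s)$. *)

theory Defs
  imports "HOL-Analysis.Analysis"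
begin

definition meijerG_integrand ::
  "nat \<Rightarrow> nat \<Rightarrow> complex list \<Rightarrow> complex list \<Rightarrow> complex \<Rightarrow> complex \<Rightarrow> complex" where
  "meijerG_integrand m n as bs z s =
     (\<Prod>j<m. Gamma (bs ! j + s)) * (\<Prod>i<n. Gamma (1 - as ! i - s)) /
     ((\<Prod>i\<in>{n..<length as}. Gamma (as ! i + s)) * (\<Prod>j\<in>{m..<length bs}. Gamma (1 - bs ! j - s)))
     * z powr (- s)"

text \<open>Meijer G-function as the contour integral over the upward vertical line Re s = c,
  i.e. s = c + i t, ds = i dt, t from -infinity to +infinity.\<close>
definition meijerG_vline ::
  "nat \<Rightarrow> nat \<Rightarrow> complex list \<Rightarrow> complex list \<Rightarrow> real \<Rightarrow> complex \<Rightarrow> complex" where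
  "meijerG_vline m n as bs c z =
     (1 / (2 * complex_of_real pi * \<i>)) *
     (LINT t|lborel. meijerG_integrand m n as bs z (Complex c t) * \<i>)"

definition comps :: "nat \<Rightarrow> nat \<Rightarrow> nat list set" where
  "comps len s = {xs. length xs = len \<and> sum_list xs = s}"

text \<open>Inner factor: sum over l_1+...+l_{k+1} = jt (l_i = ls!(i-1)).\<close>
definition H_inner :: "nat \<Rightarrow> nat \<Rightarrow> real" where
  "H_inner k jt = (\<Sum>ls\<in>comps (k + 1) jt.
      ((deriv ^^ (ls ! k)) (Gamma :: real \<Rightarrow> real) 1 / fact (ls ! k)) *
      (\<Prod>i\<in>{1..k - 1}. inverse (real (k - i + 1)) ^ (ls ! (i - 1) + 1)))"

definition H_coeff :: "nat \<Rightarrow> nat \<Rightarrow> nat \<Rightarrow> real" where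
  "H_coeff N k j = ((-1) ^ (N * k) / fact j) *
     (\<Sum>n\<in>{j..N - 1}. inverse (1/2 + real k) ^ (n - j + 1) *
        (\<Sum>js\<in>comps N (N - 1 - n). \<Prod>t\<in>{1..N}. H_inner k (js ! (t - 1))))"

end

(* With m = 0 the Gamma quotient collapses, by Gamma(-s) / Gamma(1 - s) = -1/s, to
   F(s) = -Gamma(1/2 - s)^N z^(-s) / s, which has a simple pole at s = 0 with residue -pi^(N/2) and
   poles of order N at s = 1/2 + k. Moving the line of integration from Re s = c to Re s = M picks
   up the residues in between: the horizontal edges vanish since |Gamma(1/2 - s)| = O(1/|Im s|) in
   the strip, and the integral over Re s = M is O(z^(-M) / (M-1)!), so the residue series converges
   to the integral. The residue at 1/2 + k is the coefficient of e^(N-1) in the Taylor series of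
   e^N F(1/2 + k + e), a product of the series of exp(-e log z), 1/(1/2 + k + e) and the N-th power
   of Gamma(1 - e) / ((1 + e) ... (k + e)); multiplying out the coefficients gives the H_kj. *)

theory Submission
  imports Defs "HOL-Complex_Analysis.Complex_Analysis" "HOL-Probability.Sinc_Integral"
    "HOL-Real_Asymp.Real_Asymp"
begin

lemma not_nonpos_Ints_if_Re_pos: "Re (w :: complex) > 0 \<Longrightarrow> w \<notin> \<int>\<^sub>\<le>\<^sub>0"
  by (auto elim!: nonpos_Ints_cases)

lemma not_nonpos_Ints_if_Im_nonzero: "Im (w :: complex) \<noteq> 0 \<Longrightarrow> w \<notin> \<int>\<^sub>\<le>\<^sub>0"
  by (auto elim!: nonpos_Ints_cases)

lemma half_plus_of_nat_neq_0: "(1/2 + of_nat k :: complex) \<noteq> 0"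
proof
  assume "(1/2 + of_nat k :: complex) = 0"
  then have "Re (1/2 + of_nat k :: complex) = 0" by simp
  then show False by simp
qed

lemma of_nat_neq_half_plus_of_nat: "real M \<noteq> 1/2 + real k"
proof
  assume "real M = 1/2 + real k"
  then have "real (2 * M) = real (2 * k + 1)" by simp
  then show False by (simp only: of_nat_eq_iff) presburger
qed

lemma power_le_power_pred_mult:
  fixes x A :: "'a :: linordered_semidom"
  assumes "0 \<le> x" and "x \<le> A" and "N \<ge> 1"
  shows "x ^ N \<le> A ^ (N - 1) * x"
proof -
  have "x ^ N = x ^ (N - 1) * x" using \<open>N \<ge> 1\<close> by (metis Suc_diff_le diff_Suc_1 power_Suc2)
  also have "\<dots> \<le> A ^ (N - 1) * x" using assms by (intro mult_right_mono power_mono) auto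
  finally show ?thesis .
qed

lemma min_square_one_mult_le:
  fixes c t :: real
  shows "min (c^2) 1 * (1 + t^2) \<le> c^2 + t^2"
proof (cases "c^2 \<le> 1")
  case True
  have "c^2 * t^2 \<le> 1 * t^2" using True by (intro mult_right_mono) auto
  then show ?thesis using True by (simp add: min_def algebra_simps)
qed (simp add: min_def algebra_simps)

lemma powr_le_powr_add_powr:
  fixes z a b x :: real
  assumes "z > 0" and "a \<le> x" and "x \<le> b"
  shows "z powr x \<le> z powr a + z powr b"
proof (cases "z \<ge> 1")
  case True
  then have "z powr x \<le> z powr b" using assms by (intro powr_mono) auto
  then show ?thesis using powr_ge_zero[of z a] by linarith
next
  case False
  then have "z powr x \<le> z powr a" using assms by (intro powr_mono') auto
  then show ?thesis using powr_ge_zero[of z b] by linarith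
qed

lemma norm_Gamma_le_Gamma_Re:
  fixes w :: complex
  assumes "Re w > 0"
  shows "norm (Gamma w) \<le> Gamma (Re w)"
proof -
  have A: "((\<lambda>t. of_real t powr (w - 1) / of_real (exp t)) has_integral Gamma w) {0..}"
    by (rule Gamma_integral_complex) fact
  have B: "((\<lambda>t. t powr (Re w - 1) / exp t) has_integral Gamma (Re w)) {0..}"
    by (rule Gamma_integral_real) fact
  have "norm (integral {0..} (\<lambda>t. of_real t powr (w - 1) / of_real (exp t)))
        \<le> integral {0..} (\<lambda>t. t powr (Re w - 1) / exp t)"
  proof (rule integral_norm_bound_integral)
    show "(\<lambda>t. of_real t powr (w - 1) / of_real (exp t)) integrable_on {0..}" using A by blast
    show "(\<lambda>t. t powr (Re w - 1) / exp t) integrable_on {0..}" using B by blast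
    fix t :: real assume "t \<in> {0..}"
    then show "norm (of_real t powr (w - 1) / of_real (exp t)) \<le> t powr (Re w - 1) / exp t"
      by (simp add: norm_divide norm_powr_real_powr)
  qed
  then show ?thesis using A B by (simp add: integral_unique)
qed

lemma norm_Gamma_mult_norm_pochhammer_le:
  fixes w :: complex
  assumes "Re w + real m > 0" "w \<notin> \<int>\<^sub>\<le>\<^sub>0"
  shows "norm (Gamma w) * norm (pochhammer w m) \<le> Gamma (Re w + real m)"
proof -
  have "Gamma w * pochhammer w m = Gamma (w + of_nat m)"
    using pochhammer_Gamma[OF assms(2)] Gamma_nonzero[OF assms(2)] by simp
  then have "norm (Gamma w) * norm (pochhammer w m) = norm (Gamma (w + of_nat m))"
    by (metis norm_mult)
  also have "\<dots> \<le> Gamma (Re (w + of_nat m))"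
    using assms by (intro norm_Gamma_le_Gamma_Re) simp
  finally show ?thesis by simp
qed

lemma abs_Im_power_le_norm_pochhammer:
  fixes w :: complex
  shows "\<bar>Im w\<bar> ^ m \<le> norm (pochhammer w m)"
proof -
  have "norm (pochhammer w m) = (\<Prod>j<m. norm (w + of_nat j))"
    by (simp add: pochhammer_prod prod_norm atLeast0LessThan)
  also have "\<dots> \<ge> (\<Prod>j<m. \<bar>Im w\<bar>)"
    using abs_Im_le_cmod[of "w + of_nat j" for j] by (intro prod_mono) auto
  finally show ?thesis by simp
qed

lemma norm_Gamma_mult_abs_Im_le:
  fixes w :: complex
  assumes "1 \<le> \<bar>Im w\<bar>" and "m \<ge> 1" and "Re w + real m > 0"
  shows "norm (Gamma w) * \<bar>Im w\<bar> \<le> Gamma (Re w + real m)"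
proof -
  have "\<bar>Im w\<bar> \<le> \<bar>Im w\<bar> ^ m"
    using assms power_increasing[of 1 m "\<bar>Im w\<bar>"] by simp
  also have "\<dots> \<le> norm (pochhammer w m)" by (rule abs_Im_power_le_norm_pochhammer)
  finally have "norm (Gamma w) * \<bar>Im w\<bar> \<le> norm (Gamma w) * norm (pochhammer w m)"
    by (intro mult_left_mono) auto
  also have "\<dots> \<le> Gamma (Re w + real m)"
    using assms by (intro norm_Gamma_mult_norm_pochhammer_le not_nonpos_Ints_if_Im_nonzero) auto
  finally show ?thesis .
qed

lemma norm_Gamma_half_minus_of_nat_le:
  fixes t :: real
  assumes "M \<ge> 1"
  shows "norm (Gamma (1/2 - Complex (real M) t)) * (fact (M - 1) * sqrt (1/4 + t^2)) \<le> sqrt pi"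
proof -
  define w m where "w = 1/2 - Complex (real M) t" and "m = M - 1"
  have M: "M = Suc m" using assms by (simp add: m_def)
  have "Re w = 1/2 - real M" by (simp add: w_def)
  have "w \<notin> \<int>\<^sub>\<le>\<^sub>0"
  proof
    assume "w \<in> \<int>\<^sub>\<le>\<^sub>0"
    then obtain n where "Re w = of_int n" by (auto elim!: nonpos_Ints_cases)
    then have "of_int (2 * n) = (of_int (1 - 2 * int M) :: real)" using \<open>Re w = 1/2 - real M\<close> by simp
    then have "2 * n = 1 - 2 * int M" by (simp only: of_int_eq_iff)
    then show False by presburger
  qed
  have "fact m = (\<Prod>j<m. real (m - j))" by (simp add: fact_prod_rev atLeast0LessThan)
  also have "\<dots> \<le> (\<Prod>j<m. norm (w + of_nat j))"
  proof (intro prod_mono conjI)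
    fix j assume "j \<in> {..<m}"
    then have "real (m - j) \<le> \<bar>Re (w + of_nat j)\<bar>" by (simp add: \<open>Re w = 1/2 - real M\<close> M of_nat_diff)
    also have "\<dots> \<le> norm (w + of_nat j)" by (rule abs_Re_le_cmod)
    finally show "real (m - j) \<le> norm (w + of_nat j)" .
  qed auto
  moreover have "sqrt (1/4 + t^2) = norm (w + of_nat m)"
    by (simp add: w_def M cmod_def power2_eq_square)
  ultimately have "fact m * sqrt (1/4 + t^2) \<le> (\<Prod>j<m. norm (w + of_nat j)) * norm (w + of_nat m)"
    by (simp add: mult_right_mono)
  also have "\<dots> = norm (pochhammer w M)"
    by (simp add: M pochhammer_prod prod_norm atLeast0LessThan norm_mult)
  finally have "norm (Gamma w) * (fact m * sqrt (1/4 + t^2)) \<le> norm (Gamma w) * norm (pochhammer w M)"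
    by (intro mult_left_mono) auto
  also have "\<dots> \<le> sqrt pi"
    using norm_Gamma_mult_norm_pochhammer_le[of w M] \<open>w \<notin> \<int>\<^sub>\<le>\<^sub>0\<close> \<open>Re w = 1/2 - real M\<close>
    by (simp add: Gamma_one_half_real)
  finally show ?thesis by (simp add: w_def m_def)
qed

lemma Gamma_minus_of_nat_minus:
  fixes e :: complex
  assumes "e \<notin> \<int>"
  shows "Gamma (- of_nat k - e) = (-1) ^ (k + 1) * Gamma (1 - e) / (e * pochhammer (e + 1) k)"
proof -
  define w where "w = - of_nat k - e"
  have w: "w \<notin> \<int>\<^sub>\<le>\<^sub>0"
  proof
    assume "w \<in> \<int>\<^sub>\<le>\<^sub>0"
    then have "- w - of_nat k \<in> \<int>"
      by (intro Ints_diff Ints_minus) (auto elim!: nonpos_Ints_cases)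
    with assms show False by (simp add: w_def)
  qed
  have "- (of_nat k + e) = w" by (simp add: w_def)
  then have "pochhammer w (k + 1) = (-1) ^ (k + 1) * pochhammer (of_nat k + e - of_nat (k + 1) + 1) (k + 1)"
    using pochhammer_minus[of "of_nat k + e" "k + 1"] by simp
  also have "pochhammer (of_nat k + e - of_nat (k + 1) + 1) (k + 1) = e * pochhammer (e + 1) k"
    by (simp add: pochhammer_rec)
  finally have poch: "pochhammer w (k + 1) = (-1) ^ (k + 1) * (e * pochhammer (e + 1) k)" .
  have "e + 1 \<noteq> - of_nat j" for j
  proof
    assume "e + 1 = - of_nat j"
    then have "e = - of_nat j - 1" by (simp add: eq_diff_eq)
    with assms show False by simp
  qed
  with assms have "pochhammer w (k + 1) \<noteq> 0"
    unfolding poch by (auto simp: pochhammer_eq_0_iff)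
  moreover have "pochhammer w (k + 1) * Gamma w = Gamma (1 - e)"
    using pochhammer_Gamma[OF w, of "k + 1"] Gamma_nonzero[OF w] by (simp add: w_def)
  ultimately have "Gamma w = Gamma (1 - e) / pochhammer w (k + 1)"
    by (simp add: field_simps)
  then show ?thesis
    unfolding w_def[symmetric] poch by (cases "even k") (auto simp: field_simps)
qed

lemma higher_deriv_Gamma_of_real:
  fixes x :: real
  assumes "x > 0"
  shows "(deriv ^^ n) (Gamma :: complex \<Rightarrow> complex) (of_real x) =
         of_real ((deriv ^^ n) (Gamma :: real \<Rightarrow> real) x)"
  using assms
proof (induction n arbitrary: x)
  case 0
  then show ?case by (simp add: Gamma_complex_of_real)
next
  case (Suc n)
  define gC where "gC = (deriv ^^ n) (Gamma :: complex \<Rightarrow> complex)"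
  define gR where "gR = (deriv ^^ n) (Gamma :: real \<Rightarrow> real)"
  define U where "U = {w::complex. Re w > 0}"
  have "Gamma holomorphic_on U"
    by (rule holomorphic_Gamma) (auto simp: U_def not_nonpos_Ints_if_Re_pos)
  then have "gC holomorphic_on U"
    unfolding gC_def by (rule holomorphic_higher_deriv) (simp add: U_def open_halfspace_Re_gt)
  define D where "D = deriv gC (of_real x)"
  have dD: "(gC has_field_derivative D) (at (of_real x))"
    unfolding D_def using Suc.prems \<open>gC holomorphic_on U\<close>
    by (intro holomorphic_derivI[where S = U]) (auto simp: U_def open_halfspace_Re_gt)
  have h: "((\<lambda>t. gC (of_real t)) has_derivative (\<lambda>h. D * of_real h)) (at x)"
    using has_derivative_compose[OF has_derivative_of_real[OF has_derivative_ident]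
        has_field_derivative_imp_has_derivative[OF dD]] by simp
  have real_on_axis: "gC (of_real t) = of_real (gR t)" if "t > 0" for t
    using Suc.IH[OF that] by (simp add: gC_def gR_def)
  have hR: "(gR has_derivative (\<lambda>h. Re (D * of_real h))) (at x)"
    by (rule has_derivative_transform_within_open[OF bounded_linear.has_derivative[OF bounded_linear_Re h],
          of "{0<..}"]) (use Suc.prems real_on_axis in auto)
  \<comment> \<open>\<open>gC\<close> is real on the positive axis, so the imaginary part of its derivative vanishes\<close>
  have hI: "((\<lambda>t. 0::real) has_derivative (\<lambda>h. Im (D * of_real h))) (at x)"
    by (rule has_derivative_transform_within_open[OF bounded_linear.has_derivative[OF bounded_linear_Im h],
          of "{0<..}"]) (use Suc.prems real_on_axis in auto)
  have "(\<lambda>h::real. Im (D * of_real h)) = (\<lambda>h. 0)"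
    by (rule has_derivative_unique[OF hI has_derivative_const])
  then have "Im D = 0" by (metis mult.right_neutral of_real_1)
  moreover have "(\<lambda>h. Re (D * of_real h)) = (*) (Re D)" by (auto simp: fun_eq_iff)
  then have "(gR has_field_derivative Re D) (at x)"
    using hR unfolding has_field_derivative_def by simp
  then have "deriv gR x = Re D" by (rule DERIV_imp_deriv)
  ultimately have "D = of_real (deriv gR x)" by (simp add: complex_eq_iff)
  then show ?case by (simp add: D_def gC_def gR_def)
qed

lemma higher_deriv_Gamma_1_minus:
  "(deriv ^^ n) (\<lambda>e::complex. Gamma (1 - e)) 0 =
   (-1) ^ n * of_real ((deriv ^^ n) (Gamma :: real \<Rightarrow> real) 1)"
proof -
  have "(deriv ^^ n) (\<lambda>w::complex. Gamma ((-1) * w + 1)) 0 = (-1) ^ n * (deriv ^^ n) Gamma ((-1) * 0 + 1)"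
  proof (rule higher_deriv_compose_linear'[where S = "ball 0 1" and T = "{w. Re w > 0}"])
    show "Gamma holomorphic_on {w::complex. Re w > 0}"
      by (rule holomorphic_Gamma) (auto simp: not_nonpos_Ints_if_Re_pos)
    fix w :: complex assume "w \<in> ball 0 1"
    then have "\<bar>Re w\<bar> < 1" using abs_Re_le_cmod[of w] by simp
    then show "(-1) * w + 1 \<in> {w. Re w > 0}" by simp
  qed (auto intro: open_halfspace_Re_gt)
  then show ?thesis using higher_deriv_Gamma_of_real[of 1 n] by (simp add: algebra_simps)
qed

lemma comps_0: "comps 0 m = (if m = 0 then {[]} else {})"
  by (auto simp: comps_def)

lemma comps_Suc: "comps (Suc n) m = (\<lambda>(a, xs). a # xs) ` (SIGMA a:{0..m}. comps n (m - a))"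
proof safe
  fix ys assume "ys \<in> comps (Suc n) m"
  then obtain a xs where ys: "ys = a # xs" "length xs = n" "a + sum_list xs = m"
    by (cases ys) (auto simp: comps_def)
  then show "ys \<in> (\<lambda>(a, xs). a # xs) ` (SIGMA a:{0..m}. comps n (m - a))"
    by (intro image_eqI[of _ _ "(a, xs)"]) (auto simp: comps_def)
qed (auto simp: comps_def)

lemma finite_comps: "finite (comps n m)"
proof (rule finite_subset)
  show "comps n m \<subseteq> {xs. set xs \<subseteq> {0..m} \<and> length xs = n}"
    by (auto simp: comps_def dest: member_le_sum_list)
qed (simp add: finite_lists_length_eq)

lemma sum_nth_comps: "xs \<in> comps n m \<Longrightarrow> (\<Sum>i<n. xs ! i) = m"
  unfolding comps_def by (auto simp: sum_list_sum_nth atLeast0LessThan)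

lemma fps_nth_prod_comps:
  fixes F :: "nat \<Rightarrow> 'a :: comm_ring_1 fps"
  shows "fps_nth (\<Prod>i<n. F i) m = (\<Sum>xs\<in>comps n m. \<Prod>i<n. fps_nth (F i) (xs ! i))"
proof (induction n arbitrary: F m)
  case 0
  then show ?case by (simp add: comps_0)
next
  case (Suc n)
  have "fps_nth (\<Prod>i<Suc n. F i) m = fps_nth (F 0 * (\<Prod>i<n. F (Suc i))) m"
    by (simp add: prod.lessThan_Suc_shift del: prod.lessThan_Suc)
  also have "\<dots> = (\<Sum>a=0..m. fps_nth (F 0) a * (\<Sum>xs\<in>comps n (m - a). \<Prod>i<n. fps_nth (F (Suc i)) (xs ! i)))"
    by (simp add: fps_mult_nth Suc.IH)
  also have "\<dots> = (\<Sum>(a, xs)\<in>(SIGMA a:{0..m}. comps n (m - a)). \<Prod>i<Suc n. fps_nth (F i) ((a # xs) ! i))"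
    by (subst sum.Sigma[symmetric])
       (auto simp: finite_comps sum_distrib_left prod.lessThan_Suc_shift
             simp del: prod.lessThan_Suc intro!: sum.cong)
  also have "\<dots> = (\<Sum>ys\<in>comps (Suc n) m. \<Prod>i<Suc n. fps_nth (F i) (ys ! i))"
    unfolding comps_Suc by (subst sum.reindex) (auto simp: inj_on_def case_prod_beta)
  finally show ?case .
qed

text \<open>The series below expand functions of \<open>-e\<close>, so their coefficients alternate in sign;
  the next two lemmas factor the sign out of products.\<close>
lemma fps_mult_nth_alternating:
  fixes A B :: "'a :: comm_ring_1 fps"
  assumes "\<And>n. fps_nth A n = (-1) ^ n * a n" and "\<And>n. fps_nth B n = (-1) ^ n * b n"
  shows "fps_nth (A * B) n = (-1) ^ n * (\<Sum>i=0..n. a i * b (n - i))"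
proof -
  have "fps_nth (A * B) n = (\<Sum>i=0..n. (-1) ^ n * (a i * b (n - i)))"
    unfolding fps_mult_nth assms
  proof (intro sum.cong refl)
    fix i assume "i \<in> {0..n}"
    then have "(-1 :: 'a) ^ i * (-1) ^ (n - i) = (-1) ^ n" by (simp flip: power_add)
    then show "(-1) ^ i * a i * ((-1) ^ (n - i) * b (n - i)) = (-1) ^ n * (a i * b (n - i))"
      by (metis mult.assoc mult.left_commute)
  qed
  then show ?thesis by (simp add: sum_distrib_left)
qed

lemma fps_nth_prod_alternating:
  fixes F :: "nat \<Rightarrow> 'a :: comm_ring_1 fps"
  assumes "\<And>i n. i < m \<Longrightarrow> fps_nth (F i) n = (-1) ^ n * a i n"
  shows "fps_nth (\<Prod>i<m. F i) n = (-1) ^ n * (\<Sum>xs\<in>comps m n. \<Prod>i<m. a i (xs ! i))"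
proof -
  have "fps_nth (\<Prod>i<m. F i) n = (\<Sum>xs\<in>comps m n. (-1) ^ n * (\<Prod>i<m. a i (xs ! i)))"
    unfolding fps_nth_prod_comps
  proof (intro sum.cong refl)
    fix xs assume "xs \<in> comps m n"
    then have "(\<Prod>i<m. (-1 :: 'a) ^ (xs ! i)) = (-1) ^ n"
      by (simp add: sum_nth_comps flip: power_sum)
    then show "(\<Prod>i<m. fps_nth (F i) (xs ! i)) = (-1) ^ n * (\<Prod>i<m. a i (xs ! i))"
      by (simp add: assms prod.distrib)
  qed
  then show ?thesis by (simp add: sum_distrib_left)
qed

lemma fps_nth_inverse_const_plus_X:
  fixes a :: "'a :: field"
  assumes "a \<noteq> 0"
  shows "fps_nth (inverse (fps_const a + fps_X)) n = (-1) ^ n * inverse a ^ (n + 1)"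
proof -
  define G where "G = Abs_fps (\<lambda>n. (-1) ^ n * inverse a ^ (n + 1))"
  have "(fps_const a + fps_X) * G = 1"
  proof (rule fps_ext)
    fix n show "fps_nth ((fps_const a + fps_X) * G) n = fps_nth 1 n"
      using assms by (cases n) (simp_all add: G_def distrib_right field_simps)
  qed
  then have "inverse (fps_const a + fps_X) = G" by (rule fps_inverse_unique)
  then show ?thesis by (simp add: G_def)
qed

lemma bounded_by_inverse_1_plus_square:
  fixes g :: "real \<Rightarrow> complex"
  assumes "continuous_on UNIV g" and "\<And>t. norm (g t) \<le> K * inverse (1 + t^2)"
  shows "integrable lborel g" and "norm (LINT t|lborel. g t) \<le> K * pi"
proof -
  have "integrable lborel (\<lambda>t::real. inverse (1 + t^2))"
    using integrable_inverse_1_plus_square by (simp add: set_integrable_def einterval_def)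
  then have majorant: "integrable lborel (\<lambda>t::real. K * inverse (1 + t^2))" by simp
  show g: "integrable lborel g"
    by (rule Bochner_Integration.integrable_bound[OF majorant])
       (auto intro!: borel_measurable_continuous_onI assms intro: order.trans[OF assms(2)] abs_ge_self)
  have "norm (LINT t|lborel. g t) \<le> (LINT t|lborel. K * inverse (1 + t^2))"
    by (rule Bochner_Integration.integral_norm_bound_integral[OF g majorant assms(2)])
  also have "\<dots> = K * pi"
    using LBINT_inverse_1_plus_square
    by (simp add: interval_lebesgue_integral_def set_lebesgue_integral_def einterval_def)
  finally show "norm (LINT t|lborel. g t) \<le> K * pi" .
qed

lemma continuous_on_vertical_line:
  assumes "continuous_on S f" and "\<And>t. Complex \<sigma> t \<in> S"
  shows "continuous_on UNIV (\<lambda>t. f (Complex \<sigma> t))"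
proof -
  have "(\<lambda>t. Complex \<sigma> t) = (\<lambda>t. of_real \<sigma> + \<i> * of_real t)"
    by (simp add: fun_eq_iff complex_eq_iff)
  then have "continuous_on UNIV (\<lambda>t. Complex \<sigma> t)" by (auto intro!: continuous_intros)
  then show ?thesis by (rule continuous_on_compose2[OF assms(1)]) (use assms(2) in auto)
qed

lemma tendsto_contour_integral_vertical_linepath:
  fixes f :: "complex \<Rightarrow> complex"
  assumes int: "integrable lborel (\<lambda>t. f (Complex \<sigma> t))"
  shows "((\<lambda>T. contour_integral (linepath (Complex \<sigma> (-T)) (Complex \<sigma> T)) f)
           \<longlongrightarrow> \<i> * (LINT t|lborel. f (Complex \<sigma> t))) at_top"
proof -
  define g where "g = (\<lambda>t. f (Complex \<sigma> t))"
  have truncate: "contour_integral (linepath (Complex \<sigma> (-T)) (Complex \<sigma> T)) f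
            = \<i> * (LINT t|lborel. indicator {-T..T} t *\<^sub>R g t)" if "T > 0" for T
  proof -
    have "set_integrable lborel {-T..T} g"
      unfolding set_integrable_def using int g_def by (intro integrable_mult_indicator) auto
    from set_borel_integral_eq_integral[OF this]
    have "(g has_integral (LINT t : {-T..T} | lborel. g t)) {-T..T}"
      by (simp add: has_integral_integral)
    then have "(g has_integral (- \<i> * (\<i> * (LINT t : {-T..T} | lborel. g t)))) {-T..T}" by simp
    then have "(f has_contour_integral (\<i> * (LINT t : {-T..T} | lborel. g t)))
                 (linepath (Complex \<sigma> (-T)) (Complex \<sigma> T))"
      using that unfolding g_def
      by (subst has_contour_integral_linepath_same_Re_iff[of _ \<sigma> _ "-T" T]) auto
    then show ?thesis
      by (simp add: contour_integral_unique set_lebesgue_integral_def)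
  qed
  have "((\<lambda>T. LINT t|lborel. indicator {-T..T} t *\<^sub>R g t) \<longlongrightarrow> (LINT t|lborel. g t)) at_top"
  proof (rule integral_dominated_convergence_at_top[where w = "\<lambda>t. norm (g t)"])
    show "AE t in lborel. ((\<lambda>T. indicator {-T..T} t *\<^sub>R g t) \<longlongrightarrow> g t) at_top"
    proof (rule AE_I2)
      fix t :: real
      have "eventually (\<lambda>T. indicator {-T..T} t *\<^sub>R g t = g t) at_top"
        using eventually_ge_at_top[of "\<bar>t\<bar>"] by eventually_elim (auto simp: indicator_def)
      then show "((\<lambda>T. indicator {-T..T} t *\<^sub>R g t) \<longlongrightarrow> g t) at_top"
        by (rule tendsto_eventually)
    qed
    show "\<forall>\<^sub>F T in at_top. AE t in lborel. norm (indicator {-T..T} t *\<^sub>R g t) \<le> norm (g t)"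
      by (intro always_eventually allI AE_I2) (auto simp: indicator_def)
  qed (use int g_def in auto)
  then have "((\<lambda>T. \<i> * (LINT t|lborel. indicator {-T..T} t *\<^sub>R g t)) \<longlongrightarrow> \<i> * (LINT t|lborel. g t)) at_top"
    by (intro tendsto_mult tendsto_const)
  then show ?thesis
    unfolding g_def[symmetric]
    by (rule Lim_transform_eventually) (use eventually_gt_at_top[of 0] in \<open>eventually_elim, simp add: truncate\<close>)
qed

lemma contour_integral_rectpath_eq_sum_residue:
  assumes "open S" and "connected S" and "finite P" and "f holomorphic_on S - P"
    and "Re a \<le> Re b" and "Im a \<le> Im b" and "cbox a b \<subseteq> S" and "P \<subseteq> box a b"
  shows "contour_integral (rectpath a b) f = 2 * pi * \<i> * (\<Sum>p\<in>P. residue f p)"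
proof -
  have "path_image (rectpath a b) \<subseteq> S - P"
    using assms(5-8) path_image_rectpath_cbox_minus_box[of a b] by auto
  then have "contour_integral (rectpath a b) f =
      2 * pi * \<i> * (\<Sum>p\<in>P. winding_number (rectpath a b) p * residue f p)"
    using assms(5-7)
    by (intro Residue_theorem[OF assms(1-4)]) (auto intro: winding_number_rectpath_outside)
  also have "(\<Sum>p\<in>P. winding_number (rectpath a b) p * residue f p) = (\<Sum>p\<in>P. residue f p)"
    using assms(8) by (intro sum.cong refl) (auto simp: winding_number_rectpath)
  finally show ?thesis .
qed

lemma contour_integral_rectpath_sides:
  assumes "continuous_on (path_image (rectpath a b)) f"
  shows "contour_integral (rectpath a b) f =
           contour_integral (linepath a (Complex (Re b) (Im a))) f
         + contour_integral (linepath (Complex (Re b) (Im a)) b) f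
         - contour_integral (linepath (Complex (Re a) (Im b)) b) f
         - contour_integral (linepath a (Complex (Re a) (Im b))) f"
proof -
  define a2 a4 where "a2 = Complex (Re b) (Im a)" and "a4 = Complex (Re a) (Im b)"
  have rect: "rectpath a b = linepath a a2 +++ linepath a2 b +++ linepath b a4 +++ linepath a4 a"
    by (simp add: rectpath_def Let_def a2_def a4_def)
  have "path_image (rectpath a b) =
      closed_segment a a2 \<union> (closed_segment a2 b \<union> (closed_segment b a4 \<union> closed_segment a4 a))"
    unfolding rect by (simp add: path_image_join)
  then have cont: "continuous_on (closed_segment a a2) f" "continuous_on (closed_segment a2 b) f"
    "continuous_on (closed_segment b a4) f" "continuous_on (closed_segment a4 a) f"
    using continuous_on_subset[OF assms] by auto
  have "contour_integral (rectpath a b) f =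
      contour_integral (linepath a a2) f + (contour_integral (linepath a2 b) f +
      (contour_integral (linepath b a4) f + contour_integral (linepath a4 a) f))"
    unfolding rect using contour_integrable_continuous_linepath[OF cont(1)]
      contour_integrable_continuous_linepath[OF cont(2)]
      contour_integrable_continuous_linepath[OF cont(3)]
      contour_integrable_continuous_linepath[OF cont(4)]
    by (simp add: contour_integrable_joinI)
  then show ?thesis
    using contour_integral_reverse_linepath[OF cont(3)] contour_integral_reverse_linepath[OF cont(4)]
    by (simp add: a2_def a4_def)
qed

lemma strip_rectangle_contour_integral:
  fixes f :: "complex \<Rightarrow> complex" and c d T :: real
  assumes S: "open S" "connected S" "{s. c \<le> Re s \<and> Re s \<le> d} \<subseteq> S"
    and P: "finite P" "\<And>p. p \<in> P \<Longrightarrow> c < Re p \<and> Re p < d \<and> \<bar>Im p\<bar> < T"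
    and holo: "f holomorphic_on S - P" and "c < d" and "0 < T"
  shows "contour_integral (linepath (Complex c (-T)) (Complex d (-T))) f
       + contour_integral (linepath (Complex d (-T)) (Complex d T)) f
       - contour_integral (linepath (Complex c T) (Complex d T)) f
       - contour_integral (linepath (Complex c (-T)) (Complex c T)) f
       = 2 * pi * \<i> * (\<Sum>p\<in>P. residue f p)"
proof -
  define a b where "a = Complex c (-T)" and "b = Complex d T"
  have inside: "P \<subseteq> box a b" using P(2) by (fastforce simp: a_def b_def in_box_complex_iff)
  have rectangle: "cbox a b \<subseteq> S" using S(3) by (auto simp: a_def b_def in_cbox_complex_iff)
  have corners: "Re a \<le> Re b" "Im a \<le> Im b" using \<open>c < d\<close> \<open>0 < T\<close> by (auto simp: a_def b_def)
  have "path_image (rectpath a b) \<subseteq> S - P"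
    using inside rectangle path_image_rectpath_cbox_minus_box[OF corners] by auto
  then have "continuous_on (path_image (rectpath a b)) f"
    by (rule continuous_on_subset[OF holomorphic_on_imp_continuous_on[OF holo]])
  from contour_integral_rectpath_sides[OF this]
    contour_integral_rectpath_eq_sum_residue[OF S(1,2) P(1) holo corners rectangle inside]
  show ?thesis by (simp add: a_def b_def)
qed

lemma vertical_line_integral_shift:
  fixes f :: "complex \<Rightarrow> complex" and c d :: real
  assumes "c < d" and S: "open S" "connected S" "{s. c \<le> Re s \<and> Re s \<le> d} \<subseteq> S"
    and P: "finite P" "\<And>p. p \<in> P \<Longrightarrow> c < Re p \<and> Re p < d"
    and holo: "f holomorphic_on S - P"
    and int_c: "integrable lborel (\<lambda>t. f (Complex c t))"
    and int_d: "integrable lborel (\<lambda>t. f (Complex d t))"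
    and top: "((\<lambda>T. contour_integral (linepath (Complex c T) (Complex d T)) f) \<longlongrightarrow> 0) at_top"
    and bottom: "((\<lambda>T. contour_integral (linepath (Complex c (-T)) (Complex d (-T))) f) \<longlongrightarrow> 0) at_top"
  shows "(LINT t|lborel. f (Complex d t)) - (LINT t|lborel. f (Complex c t)) =
         2 * pi * (\<Sum>p\<in>P. residue f p)"
proof -
  define R where "R T = contour_integral (linepath (Complex c (-T)) (Complex d (-T))) f
       + contour_integral (linepath (Complex d (-T)) (Complex d T)) f
       - contour_integral (linepath (Complex c T) (Complex d T)) f
       - contour_integral (linepath (Complex c (-T)) (Complex c T)) f" for T
  define T0 where "T0 = Max (insert 0 ((\<lambda>p. \<bar>Im p\<bar>) ` P))"
  have "0 \<le> T0" unfolding T0_def using P(1) by (auto intro: Max_ge)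
  have Im_le: "\<bar>Im p\<bar> \<le> T0" if "p \<in> P" for p
    unfolding T0_def using P(1) that by (auto intro: Max_ge)
  have "eventually (\<lambda>T. R T = 2 * pi * \<i> * (\<Sum>p\<in>P. residue f p)) at_top"
    using eventually_gt_at_top[of T0]
  proof (rule eventually_mono)
    fix T assume "T > T0"
    show "R T = 2 * pi * \<i> * (\<Sum>p\<in>P. residue f p)"
      unfolding R_def
    proof (rule strip_rectangle_contour_integral[OF S P(1) _ holo \<open>c < d\<close>])
      show "c < Re p \<and> Re p < d \<and> \<bar>Im p\<bar> < T" if "p \<in> P" for p
        using P(2)[OF that] Im_le[OF that] \<open>T > T0\<close> by auto
      show "0 < T" using \<open>0 \<le> T0\<close> \<open>T > T0\<close> by linarith
    qed
  qed
  then have "(R \<longlongrightarrow> 2 * pi * \<i> * (\<Sum>p\<in>P. residue f p)) at_top"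
    by (rule tendsto_eventually)
  moreover have "(R \<longlongrightarrow> 0 + \<i> * (LINT t|lborel. f (Complex d t)) - 0 - \<i> * (LINT t|lborel. f (Complex c t)))
      at_top"
    unfolding R_def
    by (intro tendsto_intros top bottom tendsto_contour_integral_vertical_linepath int_c int_d)
  ultimately have "2 * pi * \<i> * (\<Sum>p\<in>P. residue f p) =
      0 + \<i> * (LINT t|lborel. f (Complex d t)) - 0 - \<i> * (LINT t|lborel. f (Complex c t))"
    using tendsto_unique by (metis trivial_limit_at_top_linorder)
  then have "\<i> * ((LINT t|lborel. f (Complex d t)) - (LINT t|lborel. f (Complex c t))) =
      \<i> * (2 * pi * (\<Sum>p\<in>P. residue f p))"
    by (simp add: algebra_simps)
  then show ?thesis by simp
qed

lemma tendsto_contour_integral_horizontal_linepath: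
  fixes f :: "complex \<Rightarrow> complex" and c d u K :: real
  assumes "c \<le> d" and "\<bar>u\<bar> = 1"
    and cont: "continuous_on {s. c \<le> Re s \<and> Re s \<le> d \<and> 1 \<le> \<bar>Im s\<bar>} f"
    and bound: "\<And>s. c \<le> Re s \<Longrightarrow> Re s \<le> d \<Longrightarrow> 1 \<le> \<bar>Im s\<bar> \<Longrightarrow> norm (f s) \<le> K / (Im s)^2"
  shows "((\<lambda>T. contour_integral (linepath (Complex c (u * T)) (Complex d (u * T))) f) \<longlongrightarrow> 0) at_top"
proof (rule Lim_null_comparison)
  have "0 \<le> K" using bound[of "Complex c 1"] \<open>c \<le> d\<close> by (simp add: order.trans[OF norm_ge_zero])
  show "eventually (\<lambda>T. norm (contour_integral (linepath (Complex c (u * T)) (Complex d (u * T))) f)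
          \<le> K / T^2 * (d - c)) at_top"
    using eventually_ge_at_top[of 1]
  proof eventually_elim
    case (elim T)
    have "\<bar>u * T\<bar> = T" using \<open>\<bar>u\<bar> = 1\<close> elim by (simp add: abs_mult)
    have segment: "closed_segment (Complex c (u * T)) (Complex d (u * T)) =
        {s. Im s = u * T \<and> c \<le> Re s \<and> Re s \<le> d}"
      using \<open>c \<le> d\<close> by (auto simp: closed_segment_same_Im closed_segment_eq_real_ivl)
    then have "continuous_on (closed_segment (Complex c (u * T)) (Complex d (u * T))) f"
      using \<open>\<bar>u * T\<bar> = T\<close> elim by (auto intro: continuous_on_subset[OF cont])
    then have "(f has_contour_integral contour_integral (linepath (Complex c (u * T)) (Complex d (u * T))) f)
        (linepath (Complex c (u * T)) (Complex d (u * T)))"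
      by (intro has_contour_integral_integral contour_integrable_continuous_linepath)
    moreover have "norm (f s) \<le> K / T^2"
      if "s \<in> closed_segment (Complex c (u * T)) (Complex d (u * T))" for s
      using bound[of s] that \<open>\<bar>u * T\<bar> = T\<close> elim segment by (auto simp: power2_abs[of "u * T", symmetric])
    ultimately have "norm (contour_integral (linepath (Complex c (u * T)) (Complex d (u * T))) f)
        \<le> K / T^2 * norm (Complex d (u * T) - Complex c (u * T))"
      using \<open>0 \<le> K\<close> by (intro has_contour_integral_bound_linepath) auto
    also have "norm (Complex d (u * T) - Complex c (u * T)) = d - c"
      using \<open>c \<le> d\<close> by (simp add: cmod_def)
    finally show ?case .
  qed
  show "((\<lambda>T. K / T^2 * (d - c)) \<longlongrightarrow> 0) at_top" by real_asymp
qed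

definition reduced_integrand :: "nat \<Rightarrow> real \<Rightarrow> complex \<Rightarrow> complex" where
  "reduced_integrand N z s = - (Gamma (1/2 - s) ^ N) * of_real z powr (- s) / s"

lemma meijerG_integrand_eq_reduced_integrand:
  assumes "- s \<notin> \<int>\<^sub>\<le>\<^sub>0"
  shows "meijerG_integrand 0 (N + 1) (1 # replicate N (1/2)) [0] (of_real z) s =
         reduced_integrand N z s"
proof -
  have "(\<Prod>i<N + 1. Gamma (1 - (1 # replicate N (1/2)) ! i - s)) = Gamma (- s) * Gamma (1/2 - s) ^ N"
    by (simp add: prod.lessThan_Suc_shift del: prod.lessThan_Suc)
  moreover have "Gamma (1 - s) = - s * Gamma (- s)"
    using Gamma_plus1[OF assms] by (simp add: algebra_simps)
  moreover have "Gamma (- s) \<noteq> 0" using Gamma_nonzero[OF assms] .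
  moreover have "s \<noteq> 0" using assms by auto
  ultimately show ?thesis
    unfolding meijerG_integrand_def reduced_integrand_def by (simp add: field_simps)
qed

lemma norm_reduced_integrand:
  assumes "z > 0"
  shows "norm (reduced_integrand N z s) = norm (Gamma (1/2 - s)) ^ N * z powr (- Re s) / norm s"
  using assms
  by (simp add: reduced_integrand_def norm_mult norm_divide norm_power norm_powr_real_powr)

definition integrand_poles :: "nat \<Rightarrow> complex set" where
  "integrand_poles M = insert 0 ((\<lambda>k. 1/2 + of_nat k) ` {..<M})"

lemma holomorphic_reduced_integrand:
  "reduced_integrand N z holomorphic_on - insert 0 (range (\<lambda>k. 1/2 + of_nat k))"
proof -
  have "1/2 - s \<notin> \<int>\<^sub>\<le>\<^sub>0" if "s \<notin> range (\<lambda>k. 1/2 + of_nat k)" for s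
  proof
    assume "1/2 - s \<in> \<int>\<^sub>\<le>\<^sub>0"
    then obtain n where "1/2 - s = of_int n" "n \<le> 0" by (auto elim!: nonpos_Ints_cases)
    then have "s = 1/2 + of_nat (nat (- n))" by (simp add: algebra_simps)
    with that show False by blast
  qed
  then show ?thesis
    unfolding reduced_integrand_def [abs_def] by (intro holomorphic_intros) auto
qed

lemma norm_reduced_integrand_left_line:
  fixes z c t :: real
  assumes z: "z > 0" and c: "c < 0" and N: "N \<ge> 1"
  shows "norm (reduced_integrand N z (Complex c t)) \<le>
     (Gamma (1/2 - c) ^ (N - 1) * Gamma (3/2 - c) * z powr (- c) / min (c^2) 1) * inverse (1 + t^2)"
proof -
  define s w where "s = Complex c t" and "w = 1/2 - s"
  define A B where "A = Gamma (1/2 - c)" and "B = Gamma (3/2 - c)"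
  have "Re w = 1/2 - c" by (simp add: w_def s_def)
  have "A > 0" "B > 0" "min (c^2) 1 > 0" using c by (simp_all add: A_def B_def)
  have "norm (Gamma w) \<le> A"
    using norm_Gamma_le_Gamma_Re[of w] \<open>Re w = 1/2 - c\<close> c by (simp add: A_def)
  have Gamma_B: "norm (Gamma w) * norm w \<le> B"
    using norm_Gamma_mult_norm_pochhammer_le[of w 1] \<open>Re w = 1/2 - c\<close> c not_nonpos_Ints_if_Re_pos[of w]
    by (simp add: B_def)
  have "norm s \<le> norm w"
  proof -
    have "(- c)^2 \<le> (1/2 - c)^2" using c by (intro power_mono) auto
    then have "norm s ^ 2 \<le> norm w ^ 2" by (simp add: w_def s_def cmod_power2)
    then show ?thesis by (rule power2_le_imp_le) simp
  qed
  have "norm s > 0" using c by (simp add: s_def complex_eq_iff)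
  have ns2: "norm s * norm s = c^2 + t^2" by (simp add: s_def cmod_def power2_eq_square)
  have "norm (Gamma w) ^ N \<le> A ^ (N - 1) * norm (Gamma w)"
    using \<open>norm (Gamma w) \<le> A\<close> N by (intro power_le_power_pred_mult) auto
  also have "\<dots> \<le> A ^ (N - 1) * (B / norm s)"
  proof (intro mult_left_mono)
    have "norm (Gamma w) * norm s \<le> B"
      using Gamma_B \<open>norm s \<le> norm w\<close> by (meson mult_left_mono norm_ge_zero order.trans)
    then show "norm (Gamma w) \<le> B / norm s" using \<open>norm s > 0\<close> by (simp add: field_simps)
  qed (use \<open>A > 0\<close> in auto)
  finally have Gamma_power: "norm (Gamma w) ^ N \<le> A ^ (N - 1) * (B / norm s)" .
  have "norm (reduced_integrand N z s) = norm (Gamma w) ^ N * z powr (- c) / norm s"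
    using norm_reduced_integrand[OF z] by (simp add: w_def s_def)
  also have "\<dots> \<le> A ^ (N - 1) * (B / norm s) * z powr (- c) / norm s"
    using Gamma_power \<open>norm s > 0\<close> by (intro divide_right_mono mult_right_mono) auto
  also have "\<dots> = A ^ (N - 1) * B * z powr (- c) / (c^2 + t^2)"
    unfolding ns2[symmetric] using \<open>norm s > 0\<close> by (simp add: field_simps)
  also have "\<dots> \<le> A ^ (N - 1) * B * z powr (- c) / (min (c^2) 1 * (1 + t^2))"
    using \<open>A > 0\<close> \<open>B > 0\<close> \<open>min (c^2) 1 > 0\<close> min_square_one_mult_le[of c t]
      add_pos_nonneg[of 1 "t^2"] ns2 \<open>norm s > 0\<close> mult_pos_pos[of "norm s" "norm s"]
    by (intro divide_left_mono mult_pos_pos) auto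
  finally show ?thesis by (simp add: s_def A_def B_def field_simps)
qed

lemma norm_reduced_integrand_right_line:
  fixes z t :: real
  assumes z: "z > 0" and N: "N \<ge> 1" and M: "M \<ge> 4"
  shows "norm (reduced_integrand N z (Complex (real M) t)) \<le>
     (4 * sqrt pi * z powr (- real M) / fact (M - 1)) * inverse (1 + t^2)"
proof -
  define s r where "s = Complex (real M) t" and "r = sqrt (1/4 + t^2)"
  define G where "G = norm (Gamma (1/2 - s))"
  have "r \<ge> 1/2" unfolding r_def by (rule real_le_rsqrt) (simp add: power_divide)
  have "1 \<le> (real M)^2" using M by (intro one_le_power) simp
  then have "1/4 \<le> (real M)^2" by simp
  then have "r \<le> norm s" unfolding r_def s_def cmod_def by (intro real_sqrt_le_mono) simp
  have "r * r = 1/4 + t^2" by (simp add: r_def)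
  have "G * (fact (M - 1) * r) \<le> sqrt pi"
    using norm_Gamma_half_minus_of_nat_le[of M t] M by (simp add: G_def s_def r_def)
  then have G: "G \<le> sqrt pi / (fact (M - 1) * r)"
    using \<open>r \<ge> 1/2\<close> by (simp add: field_simps)
  have "fact 3 \<le> (fact (M - 1) :: real)" using M by (intro fact_mono) auto
  moreover have "sqrt pi \<le> 2" using real_sqrt_le_mono[of pi 4] pi_less_4 by simp
  ultimately have "sqrt pi / (fact (M - 1) * r) \<le> 2 / (6 * (1/2))"
    using \<open>r \<ge> 1/2\<close> by (intro frac_le mult_mono) (auto simp: fact_numeral)
  with G have "G \<le> 1" by linarith
  then have "G ^ N \<le> G"
    using power_le_power_pred_mult[of G 1 N] N by (simp add: G_def)
  have "norm (reduced_integrand N z s) = G ^ N * z powr (- real M) / norm s"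
    using norm_reduced_integrand[OF z] by (simp add: G_def s_def)
  also have "\<dots> \<le> sqrt pi / (fact (M - 1) * r) * z powr (- real M) / norm s"
    using \<open>G ^ N \<le> G\<close> G \<open>r \<le> norm s\<close> \<open>r \<ge> 1/2\<close>
    by (intro divide_right_mono mult_right_mono) auto
  also have "\<dots> = sqrt pi * z powr (- real M) / fact (M - 1) / (r * norm s)"
    by (simp add: field_simps)
  also have "\<dots> \<le> sqrt pi * z powr (- real M) / fact (M - 1) / ((1 + t^2) / 4)"
  proof (rule divide_left_mono)
    have "r * r \<le> r * norm s" using \<open>r \<le> norm s\<close> \<open>r \<ge> 1/2\<close> by (intro mult_left_mono) auto
    moreover have "(1 + u) / 4 \<le> 1/4 + u" if "0 \<le> u" for u :: real using that by simp
    then have "(1 + t^2) / 4 \<le> 1/4 + t^2" by simp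
    ultimately show "(1 + t^2) / 4 \<le> r * norm s" using \<open>r * r = 1/4 + t^2\<close> by linarith
    show "0 < r * norm s * ((1 + t^2) / 4)"
      using \<open>r \<ge> 1/2\<close> \<open>r \<le> norm s\<close> add_pos_nonneg[of 1 "t^2"] by (intro mult_pos_pos) auto
  qed auto
  finally show ?thesis by (simp add: s_def field_simps)
qed

lemma norm_reduced_integrand_horizontal:
  fixes z c :: real and s :: complex
  assumes z: "z > 0" and N: "N \<ge> 1" and c: "c < 0"
    and Re_s: "c \<le> Re s" "Re s \<le> real M" and Im_s: "1 \<le> \<bar>Im s\<bar>"
  shows "norm (reduced_integrand N z s) \<le>
     (max (Gamma (3/2 + real M - c)) 1) ^ N * (z powr (- c) + z powr (- real M)) / (Im s)^2"
proof -
  define K where "K = max (Gamma (3/2 + real M - c)) 1"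
  define G where "G = norm (Gamma (1/2 - s))"
  have "G * \<bar>Im s\<bar> \<le> Gamma (3/2 + real M - Re s)"
    using norm_Gamma_mult_abs_Im_le[of "1/2 - s" "M + 1"] Im_s Re_s
    by (simp add: G_def algebra_simps)
  also have "\<dots> \<le> K"
  proof (cases "Re s = c")
    case False
    then have "Gamma (3/2 + real M - Re s) < Gamma (3/2 + real M - c)"
      using Re_s by (intro Gamma_real_strict_mono) auto
    then show ?thesis by (simp add: K_def)
  qed (simp add: K_def)
  finally have G: "G \<le> K / \<bar>Im s\<bar>" using Im_s by (simp add: field_simps)
  also have "\<dots> \<le> K" using divide_left_mono[of 1 "\<bar>Im s\<bar>" K] Im_s by (simp add: K_def)
  finally have "G ^ N \<le> K ^ (N - 1) * G"
    using N by (intro power_le_power_pred_mult) (auto simp: G_def)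
  also have "\<dots> \<le> K ^ (N - 1) * (K / \<bar>Im s\<bar>)"
    using G by (intro mult_left_mono) (auto simp: K_def)
  also have "\<dots> = K ^ N / \<bar>Im s\<bar>"
    using N by (simp add: power_Suc2[symmetric])
  finally have G_power: "G ^ N \<le> K ^ N / \<bar>Im s\<bar>" .
  have "z powr (- Re s) \<le> z powr (- real M) + z powr (- c)"
    using Re_s z by (intro powr_le_powr_add_powr) auto
  moreover have "\<bar>Im s\<bar> \<le> norm s" by (rule abs_Im_le_cmod)
  ultimately have "G ^ N * z powr (- Re s) / norm s \<le>
      (K ^ N / \<bar>Im s\<bar>) * (z powr (- c) + z powr (- real M)) / \<bar>Im s\<bar>"
    using G_power Im_s by (intro frac_le mult_mono) (auto simp: K_def add.commute)
  also have "\<dots> = K ^ N * (z powr (- c) + z powr (- real M)) / (Im s)^2"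
    by (simp add: power2_eq_square abs_mult_self_eq)
  finally show ?thesis
    using norm_reduced_integrand[OF z] by (simp add: G_def K_def)
qed

lemma residue_reduced_integrand_0:
  assumes "z > 0"
  shows "residue (reduced_integrand N z) 0 = - of_real (pi powr (real N / 2))"
proof -
  define g where "g = (\<lambda>w::complex. - (Gamma (1/2 - w) ^ N) * of_real z powr (- w))"
  have "g holomorphic_on ball 0 (1/2)"
    unfolding g_def
  proof (intro holomorphic_intros)
    fix w :: complex assume "w \<in> ball 0 (1/2)"
    then have "\<bar>Re w\<bar> < 1/2" using abs_Re_le_cmod[of w] by simp
    then show "1/2 - w \<notin> \<int>\<^sub>\<le>\<^sub>0" by (intro not_nonpos_Ints_if_Re_pos) simp
  qed
  moreover have "reduced_integrand N z = (\<lambda>w. g w / (w - 0))"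
    by (simp add: reduced_integrand_def g_def fun_eq_iff)
  ultimately have "residue (reduced_integrand N z) 0 = g 0"
    using residue_simple[of "ball 0 (1/2)" 0 g] by simp
  also have "\<dots> = - of_real (sqrt pi ^ N)"
    using assms by (simp add: g_def Gamma_one_half_complex)
  also have "sqrt pi ^ N = pi powr (real N / 2)"
    by (simp add: powr_half_sqrt[symmetric] powr_realpow[symmetric] powr_powr)
  finally show ?thesis by (metis of_real_power)
qed

definition Gamma_1_minus_fps :: "complex fps" where
  "Gamma_1_minus_fps = fps_expansion (\<lambda>e. Gamma (1 - e)) 0"

lemma has_fps_expansion_Gamma_1_minus: "(\<lambda>e. Gamma (1 - e)) has_fps_expansion Gamma_1_minus_fps"
  unfolding Gamma_1_minus_fps_def
proof (rule has_fps_expansion_fps_expansion[of "ball 0 1"])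
  show "(\<lambda>e. Gamma (1 - e)) holomorphic_on ball 0 1"
  proof (intro holomorphic_intros)
    fix e :: complex assume "e \<in> ball 0 1"
    then have "\<bar>Re e\<bar> < 1" using abs_Re_le_cmod[of e] by simp
    then show "1 - e \<notin> \<int>\<^sub>\<le>\<^sub>0" by (intro not_nonpos_Ints_if_Re_pos) simp
  qed
qed auto

lemma fps_nth_Gamma_1_minus_fps:
  "fps_nth Gamma_1_minus_fps l = (-1) ^ l * of_real ((deriv ^^ l) (Gamma :: real \<Rightarrow> real) 1 / fact l)"
  by (simp add: Gamma_1_minus_fps_def fps_expansion_def higher_deriv_Gamma_1_minus)

definition pole_factor_fps :: "nat \<Rightarrow> complex fps" where
  "pole_factor_fps k = Gamma_1_minus_fps * (\<Prod>j<k. inverse (fps_const (of_nat (Suc j)) + fps_X))"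

text \<open>The factor with \<open>q = k - 1\<close> is \<open>1\<close>, which is why \<^const>\<open>H_inner\<close> stops at \<open>i = k - 1\<close>.\<close>
lemma prod_inverse_diff_reindex:
  fixes ls :: "nat list"
  shows "(\<Prod>q<k. inverse (real (k - q)) ^ (ls ! q + 1)) =
         (\<Prod>i\<in>{1..k - 1}. inverse (real (k - i + 1)) ^ (ls ! (i - 1) + 1))"
proof (cases k)
  case (Suc m)
  have "(\<Prod>q<m. inverse (real (Suc m - q)) ^ (ls ! q + 1)) =
        (\<Prod>i\<in>{Suc 0..m}. inverse (real (Suc m - i + 1)) ^ (ls ! (i - 1) + 1))"
    by (subst prod.atLeast1_atMost_eq)
       (auto intro!: prod.cong simp: Suc_diff_Suc of_nat_diff algebra_simps)
  then show ?thesis by (simp add: Suc)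
qed simp

lemma fps_nth_pole_factor_fps:
  "fps_nth (pole_factor_fps k) J = (-1) ^ J * of_real (H_inner k J)"
proof -
  define F where "F q = (if q < k then inverse (fps_const (of_nat (k - q)) + fps_X)
                         else Gamma_1_minus_fps)" for q
  define a where "a q l = (if q < k then inverse (real (k - q)) ^ (l + 1)
                           else (deriv ^^ l) (Gamma :: real \<Rightarrow> real) 1 / fact l)" for q l
  have "(\<Prod>q<k. F q) = (\<Prod>q<k. inverse (fps_const (of_nat (Suc (k - Suc q))) + fps_X))"
    by (intro prod.cong refl) (simp add: F_def Suc_diff_Suc)
  also have "\<dots> = (\<Prod>j<k. inverse (fps_const (of_nat (Suc j)) + fps_X))"
    by (rule prod.nat_diff_reindex)
  finally have "pole_factor_fps k = (\<Prod>q<Suc k. F q)"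
    by (simp add: pole_factor_fps_def F_def mult.commute)
  moreover have "fps_nth (F q) l = (-1) ^ l * of_real (a q l)" if "q < Suc k" for q l
    using that
    by (cases "q < k")
       (simp_all add: F_def a_def fps_nth_inverse_const_plus_X fps_nth_Gamma_1_minus_fps)
  ultimately have "fps_nth (pole_factor_fps k) J =
      (-1) ^ J * (\<Sum>ls\<in>comps (Suc k) J. \<Prod>q<Suc k. of_real (a q (ls ! q)))"
    using fps_nth_prod_alternating[of "Suc k" F "\<lambda>q l. of_real (a q l)"] by simp
  also have "(\<Sum>ls\<in>comps (Suc k) J. \<Prod>q<Suc k. of_real (a q (ls ! q))) =
      (of_real (\<Sum>ls\<in>comps (Suc k) J. \<Prod>q<Suc k. a q (ls ! q)) :: complex)"
    by (simp only: of_real_sum of_real_prod)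
  also have "(\<Sum>ls\<in>comps (Suc k) J. \<Prod>q<Suc k. a q (ls ! q)) = H_inner k J"
    unfolding H_inner_def
  proof (rule sum.cong)
    show "comps (Suc k) J = comps (k + 1) J" by simp
  next
    fix ls :: "nat list"
    have "(\<Prod>q<Suc k. a q (ls ! q)) =
        (deriv ^^ (ls ! k)) (Gamma :: real \<Rightarrow> real) 1 / fact (ls ! k) *
        (\<Prod>q<k. inverse (real (k - q)) ^ (ls ! q + 1))"
      by (simp add: a_def mult.commute)
    then show "(\<Prod>q<Suc k. a q (ls ! q)) =
        (deriv ^^ (ls ! k)) (Gamma :: real \<Rightarrow> real) 1 / fact (ls ! k) *
        (\<Prod>i\<in>{1..k - 1}. inverse (real (k - i + 1)) ^ (ls ! (i - 1) + 1))"
      by (simp only: prod_inverse_diff_reindex)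
  qed
  finally show ?thesis .
qed

definition H_inner_pow :: "nat \<Rightarrow> nat \<Rightarrow> nat \<Rightarrow> real" where
  "H_inner_pow N k J = (\<Sum>js\<in>comps N J. \<Prod>t\<in>{1..N}. H_inner k (js ! (t - 1)))"

lemma fps_nth_pole_factor_fps_power:
  "fps_nth (pole_factor_fps k ^ N) J = (-1) ^ J * of_real (H_inner_pow N k J)"
proof -
  have "fps_nth (pole_factor_fps k ^ N) J = fps_nth (\<Prod>i<N. pole_factor_fps k) J" by simp
  also have "\<dots> = (-1) ^ J * (\<Sum>js\<in>comps N J. \<Prod>i<N. of_real (H_inner k (js ! i)))"
    by (rule fps_nth_prod_alternating) (rule fps_nth_pole_factor_fps)
  also have "(\<Prod>i<N. H_inner k (js ! i)) = (\<Prod>t\<in>{1..N}. H_inner k (js ! (t - 1)))" for js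
    using prod.atLeast1_atMost_eq[where n = N and g = "\<lambda>t. H_inner k (js ! (t - 1))"] by simp
  then have "(\<Sum>js\<in>comps N J. \<Prod>i<N. of_real (H_inner k (js ! i))) = (of_real (H_inner_pow N k J) :: complex)"
    by (simp add: H_inner_pow_def flip: of_real_prod)
  finally show ?thesis .
qed

definition pole_numerator :: "nat \<Rightarrow> real \<Rightarrow> nat \<Rightarrow> complex \<Rightarrow> complex" where
  "pole_numerator N z k e =
     - (((-1) ^ (k + 1)) ^ N) * of_real z powr (- (1/2 + of_nat k)) *
     (exp (- of_real (ln z) * e) *
      (inverse (1/2 + of_nat k + e) * (Gamma (1 - e) * (\<Prod>j<k. inverse (of_nat (Suc j) + e))) ^ N))"

definition pole_numerator_fps :: "nat \<Rightarrow> real \<Rightarrow> nat \<Rightarrow> complex fps" where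
  "pole_numerator_fps N z k =
     fps_const (- (((-1) ^ (k + 1)) ^ N) * of_real z powr (- (1/2 + of_nat k))) *
     (fps_exp (- of_real (ln z)) *
      (inverse (fps_const (1/2 + of_nat k) + fps_X) * pole_factor_fps k ^ N))"

lemma has_fps_expansion_inverse_const_plus:
  fixes a :: complex
  assumes "a \<noteq> 0"
  shows "(\<lambda>e. inverse (a + e)) has_fps_expansion inverse (fps_const a + fps_X)"
  using assms
  by (intro has_fps_expansion_inverse has_fps_expansion_add has_fps_expansion_const
        has_fps_expansion_fps_X) auto

lemma has_fps_expansion_pole_numerator:
  "pole_numerator N z k has_fps_expansion pole_numerator_fps N z k"
proof -
  have "(\<lambda>e. \<Prod>j<k. inverse (of_nat (Suc j) + e)) has_fps_expansion
        (\<Prod>j<k. inverse (fps_const (of_nat (Suc j) :: complex) + fps_X))"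
    by (intro has_fps_expansion_prod has_fps_expansion_inverse_const_plus) (rule of_nat_neq_0)
  then show ?thesis
    unfolding pole_numerator_def [abs_def] pole_numerator_fps_def pole_factor_fps_def
    by (intro has_fps_expansion_cmult_left has_fps_expansion_mult has_fps_expansion_exp
          has_fps_expansion_inverse_const_plus has_fps_expansion_power
          has_fps_expansion_Gamma_1_minus half_plus_of_nat_neq_0)
qed

lemma reduced_integrand_near_pole:
  fixes e :: complex
  assumes z: "z > 0" and e: "e \<notin> \<int>"
  shows "reduced_integrand N z (1/2 + of_nat k + e) = pole_numerator N z k e / e ^ N"
proof -
  define P where "P = pochhammer (e + 1) k"
  have "P = (\<Prod>j<k. of_nat (Suc j) + e)"
    by (simp add: P_def pochhammer_prod atLeast0LessThan algebra_simps)
  then have prod: "inverse P = (\<Prod>j<k. inverse (of_nat (Suc j) + e))"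
    by (simp add: prod_inversef[symmetric] o_def)
  have arg: "1/2 - (1/2 + of_nat k + e) = - of_nat k - e" by simp
  have Gamma: "Gamma (1/2 - (1/2 + of_nat k + e)) = (-1) ^ (k + 1) * (Gamma (1 - e) * inverse P) / e"
  proof -
    have "a * g / (e * p) = a * (g * inverse p) / e" for a g p :: complex
      by (simp add: divide_inverse mult_ac)
    then show ?thesis unfolding arg Gamma_minus_of_nat_minus[OF e] P_def .
  qed
  have powr: "of_real z powr (- (1/2 + of_nat k + e)) =
      of_real z powr (- (1/2 + of_nat k)) * exp (- of_real (ln z) * e)"
    using z by (simp add: powr_def Ln_of_real exp_add[symmetric] algebra_simps)
  have alg: "- ((a * x / e) ^ N) * (p * q) / r = - (a ^ N) * p * (q * (inverse r * x ^ N)) / e ^ N"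
    for a x p q r :: complex
    by (simp add: power_mult_distrib power_divide divide_inverse mult_ac power_inverse)
  show ?thesis
    unfolding reduced_integrand_def pole_numerator_def Gamma powr alg prod[symmetric] by (rule refl)
qed

lemma residue_reduced_integrand_half_plus_of_nat:
  assumes "z > 0" and "N \<ge> 1"
  shows "residue (reduced_integrand N z) (1/2 + of_nat k) = fps_nth (pole_numerator_fps N z k) (N - 1)"
proof -
  have "eventually (\<lambda>e::complex. e \<in> ball 0 (1/2) - {0}) (at 0)"
    by (intro eventually_at_in_open) auto
  then have near: "eventually (\<lambda>e. reduced_integrand N z (1/2 + of_nat k + e) =
      pole_numerator N z k e / e ^ Suc (N - 1)) (at 0)"
  proof eventually_elim
    case (elim e)
    then have "norm e < 1/2" and "e \<noteq> 0" by auto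
    have "e \<notin> \<int>"
    proof
      assume "e \<in> \<int>"
      then obtain m where "e = of_int m" by (auto elim: Ints_cases)
      with \<open>norm e < 1/2\<close> \<open>e \<noteq> 0\<close> show False by (simp add: norm_of_int)
    qed
    then show ?case using reduced_integrand_near_pole[OF \<open>z > 0\<close>] \<open>N \<ge> 1\<close> by simp
  qed
  have "residue (reduced_integrand N z) (1/2 + of_nat k) =
      residue (\<lambda>e. reduced_integrand N z (1/2 + of_nat k + e)) 0"
    by (rule residue_shift_0)
  also have "\<dots> = residue (\<lambda>e. pole_numerator N z k e / e ^ Suc (N - 1)) 0"
    by (rule residue_cong) (use near in simp_all)
  also have "\<dots> = fps_nth (pole_numerator_fps N z k) (N - 1)"
    by (rule residue_fps_expansion_over_power_at_0[OF has_fps_expansion_pole_numerator])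
  finally show ?thesis .
qed

lemma sum_H_coeff_eq:
  assumes "N \<ge> 1"
  shows "(\<Sum>j<N. H_coeff N k j * x ^ j) =
    (-1) ^ (N * k) * (\<Sum>j=0..N-1. x ^ j / fact j *
      (\<Sum>r=0..N-1-j. inverse (1/2 + real k) ^ (r + 1) * H_inner_pow N k (N-1-j-r)))"
proof -
  define T where "T j = (\<Sum>r=0..N-1-j. inverse (1/2 + real k) ^ (r + 1) * H_inner_pow N k (N-1-j-r))"
    for j
  have H_coeff: "H_coeff N k j = (-1) ^ (N * k) / fact j * T j" if "j \<le> N - 1" for j
  proof -
    define g where "g n = inverse (1/2 + real k) ^ (n - j + 1) * H_inner_pow N k (N - 1 - n)" for n
    have "H_coeff N k j = (-1) ^ (N * k) / fact j * sum g {j..N-1}"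
      by (simp add: H_coeff_def g_def H_inner_pow_def)
    also have "{j..N-1} = {0 + j..(N - 1 - j) + j}" using that by simp
    also have "sum g {0 + j..(N - 1 - j) + j} = (\<Sum>r=0..N-1-j. g (r + j))"
      by (rule sum.shift_bounds_cl_nat_ivl)
    also have "\<dots> = T j"
      unfolding T_def by (intro sum.cong refl) (simp add: g_def add.commute)
    finally show ?thesis .
  qed
  have "{..<N} = {0..N-1}" using assms by auto
  then have "(\<Sum>j<N. H_coeff N k j * x ^ j) = (\<Sum>j=0..N-1. (-1) ^ (N * k) * (x ^ j / fact j * T j))"
    by (intro sum.cong) (simp_all add: H_coeff)
  then show ?thesis by (simp add: sum_distrib_left T_def)
qed

lemma fps_nth_fps_exp_minus_of_real:
  "fps_nth (fps_exp (- of_real x)) j = (-1) ^ j * (of_real (x ^ j / fact j) :: 'a :: real_normed_field)"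
proof -
  have "fps_nth (fps_exp (- of_real x :: 'a)) j = (-1) ^ j * of_real x ^ j / fact j"
    by (simp only: fps_exp_nth power_minus[of "of_real x"] of_nat_fact)
  also have "\<dots> = (-1) ^ j * of_real (x ^ j / fact j)"
    by (simp only: of_real_divide of_real_power of_real_fact times_divide_eq_right)
  finally show ?thesis .
qed

lemma neg_one_power_sign:
  assumes "N \<ge> 1"
  shows "- (((-1 :: 'a :: comm_ring_1) ^ (k + 1)) ^ N) * (-1) ^ (N - 1) = (-1) ^ (N * k)"
proof -
  obtain n where n: "N = Suc n" using assms by (cases N) auto
  have "((-1 :: 'a) ^ (k + 1)) ^ N = (-1) ^ (N * k) * (-1) ^ n * (-1)"
    by (simp add: n power_add algebra_simps) (simp add: power_minus[of "(-1) ^ k"] power_mult)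
  moreover have "(-1 :: 'a) ^ n * (-1) ^ n = 1"
    by (simp add: power_add[symmetric] power_mult_distrib[symmetric])
  ultimately show ?thesis by (simp add: n algebra_simps)
qed

lemma fps_nth_pole_numerator_fps:
  assumes z: "z > 0" and N: "N \<ge> 1"
  shows "fps_nth (pole_numerator_fps N z k) (N - 1) =
         of_real (z powr (- 1/2 - real k) * (\<Sum>j<N. H_coeff N k j * (ln z) ^ j))"
proof -
  define ip where "ip = inverse (1/2 + real k)"
  define S where "S = (\<Sum>j=0..N-1. ln z ^ j / fact j *
      (\<Sum>r=0..N-1-j. ip ^ (r + 1) * H_inner_pow N k (N-1-j-r)))"
  have inverse: "fps_nth (inverse (fps_const (1/2 + of_nat k) + fps_X)) r =
      (-1) ^ r * (of_real (ip ^ (r + 1)) :: complex)"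
    for r
    using fps_nth_inverse_const_plus_X[OF half_plus_of_nat_neq_0] by (simp add: ip_def)
  have "fps_nth (fps_exp (- of_real (ln z)) *
          (inverse (fps_const (1/2 + of_nat k) + fps_X) * pole_factor_fps k ^ N)) (N - 1) =
        (-1) ^ (N - 1) * (\<Sum>j=0..N-1. of_real (ln z ^ j / fact j) *
          (\<Sum>r=0..N-1-j. of_real (ip ^ (r + 1)) * of_real (H_inner_pow N k (N-1-j-r))))"
    by (rule fps_mult_nth_alternating[OF fps_nth_fps_exp_minus_of_real
          fps_mult_nth_alternating[OF inverse fps_nth_pole_factor_fps_power]])
  also have "(\<Sum>j=0..N-1. of_real (ln z ^ j / fact j) *
          (\<Sum>r=0..N-1-j. of_real (ip ^ (r + 1)) * of_real (H_inner_pow N k (N-1-j-r)))) =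
        (of_real S :: complex)"
    by (simp add: S_def)
  finally have coeff: "fps_nth (fps_exp (- of_real (ln z)) *
          (inverse (fps_const (1/2 + of_nat k) + fps_X) * pole_factor_fps k ^ N)) (N - 1) =
        (-1) ^ (N - 1) * of_real S" .
  have "(- (1/2 + of_nat k) :: complex) = of_real (- 1/2 - real k)" by simp
  then have powr: "of_real z powr (- (1/2 + of_nat k)) = (of_real (z powr (- 1/2 - real k)) :: complex)"
    using powr_of_real[of z "- 1/2 - real k"] z by simp
  have "fps_nth (pole_numerator_fps N z k) (N - 1) =
      (- (((-1) ^ (k + 1)) ^ N) * (-1) ^ (N - 1)) * of_real z powr (- (1/2 + of_nat k)) * of_real S"
    unfolding pole_numerator_fps_def fps_mult_left_const_nth coeff by (simp add: mult_ac)
  also have "\<dots> = of_real (z powr (- 1/2 - real k) * ((-1) ^ (N * k) * S))"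
    unfolding neg_one_power_sign[OF N] powr by simp
  also have "(-1) ^ (N * k) * S = (\<Sum>j<N. H_coeff N k j * (ln z) ^ j)"
    using sum_H_coeff_eq[OF N] by (simp add: S_def ip_def)
  finally show ?thesis .
qed

lemma sum_residue_reduced_integrand:
  assumes "z > 0" and "N \<ge> 1"
  shows "(\<Sum>p\<in>integrand_poles M. residue (reduced_integrand N z) p) =
         - of_real (pi powr (real N / 2)) +
         (\<Sum>k<M. of_real (z powr (- 1/2 - real k) * (\<Sum>j<N. H_coeff N k j * (ln z) ^ j)))"
proof -
  have "0 \<notin> (\<lambda>k. 1/2 + of_nat k :: complex) ` {..<M}"
    using half_plus_of_nat_neq_0 by (metis imageE)
  moreover have "inj_on (\<lambda>k. 1/2 + of_nat k :: complex) {..<M}" by (auto simp: inj_on_def)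
  ultimately have "(\<Sum>p\<in>integrand_poles M. residue (reduced_integrand N z) p) =
      residue (reduced_integrand N z) 0 + (\<Sum>k<M. residue (reduced_integrand N z) (1/2 + of_nat k))"
    by (simp add: integrand_poles_def sum.reindex)
  then show ?thesis
    by (simp only: residue_reduced_integrand_0 residue_reduced_integrand_half_plus_of_nat
        fps_nth_pole_numerator_fps assms)
qed

lemma continuous_reduced_integrand_vertical_line:
  assumes "\<sigma> \<noteq> 0" and "\<And>k. \<sigma> \<noteq> 1/2 + real k"
  shows "continuous_on UNIV (\<lambda>t. reduced_integrand N z (Complex \<sigma> t))"
proof (rule continuous_on_vertical_line)
  show "continuous_on (- insert 0 (range (\<lambda>k. 1/2 + of_nat k))) (reduced_integrand N z)"
    by (rule holomorphic_on_imp_continuous_on[OF holomorphic_reduced_integrand])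
  fix t
  show "Complex \<sigma> t \<in> - insert 0 (range (\<lambda>k. 1/2 + of_nat k))"
    using assms by (auto simp: complex_eq_iff)
qed

lemma reduced_integrand_line_integral_shift:
  assumes z: "z > 0" and N: "N \<ge> 1" and c: "c < 0" and M: "M \<ge> 4"
  shows "(LINT t|lborel. reduced_integrand N z (Complex (real M) t)) -
         (LINT t|lborel. reduced_integrand N z (Complex c t)) =
         2 * pi * (\<Sum>p\<in>integrand_poles M. residue (reduced_integrand N z) p)"
proof (rule vertical_line_integral_shift)
  let ?S = "{s. Re s < real M + 1/4}"
  show "c < real M" "open ?S" "connected ?S" "{s. c \<le> Re s \<and> Re s \<le> real M} \<subseteq> ?S"
    using c by (auto intro: open_halfspace_Re_lt convex_connected convex_halfspace_Re_lt)
  show "finite (integrand_poles M)" by (simp add: integrand_poles_def)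
  show "c < Re p \<and> Re p < real M" if "p \<in> integrand_poles M" for p
    using that c M by (auto simp: integrand_poles_def)
  have "?S - integrand_poles M \<subseteq> - insert 0 (range (\<lambda>k. 1/2 + of_nat k))"
    by (auto simp: integrand_poles_def)
  then show "reduced_integrand N z holomorphic_on ?S - integrand_poles M"
    by (rule holomorphic_on_subset[OF holomorphic_reduced_integrand])
  show "integrable lborel (\<lambda>t. reduced_integrand N z (Complex c t))"
    by (rule bounded_by_inverse_1_plus_square(1)[OF continuous_reduced_integrand_vertical_line
        norm_reduced_integrand_left_line[OF z c N]]) (use c in auto)
  show "integrable lborel (\<lambda>t. reduced_integrand N z (Complex (real M) t))"
    by (rule bounded_by_inverse_1_plus_square(1)[OF continuous_reduced_integrand_vertical_line
        norm_reduced_integrand_right_line[OF z N M]]) (use M of_nat_neq_half_plus_of_nat in auto)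
  have "{s. c \<le> Re s \<and> Re s \<le> real M \<and> 1 \<le> \<bar>Im s\<bar>} \<subseteq> - insert 0 (range (\<lambda>k. 1/2 + of_nat k))"
    by auto
  then have "continuous_on {s. c \<le> Re s \<and> Re s \<le> real M \<and> 1 \<le> \<bar>Im s\<bar>} (reduced_integrand N z)"
    by (rule continuous_on_subset[OF holomorphic_on_imp_continuous_on[OF holomorphic_reduced_integrand]])
  note horizontal = tendsto_contour_integral_horizontal_linepath[OF _ _ this norm_reduced_integrand_horizontal[OF z N c]]
  show "((\<lambda>T. contour_integral (linepath (Complex c T) (Complex (real M) T)) (reduced_integrand N z))
      \<longlongrightarrow> 0) at_top"
    using horizontal[of 1] c by simp
  show "((\<lambda>T. contour_integral (linepath (Complex c (-T)) (Complex (real M) (-T))) (reduced_integrand N z))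
      \<longlongrightarrow> 0) at_top"
    using horizontal[of "-1"] c by simp
qed

lemma reduced_integrand_right_line_integral_tendsto_0:
  assumes z: "z > 0" and N: "N \<ge> 1"
  shows "(\<lambda>M. LINT t|lborel. reduced_integrand N z (Complex (real M) t)) \<longlonglongrightarrow> 0"
proof (rule Lim_null_comparison)
  show "eventually (\<lambda>M. norm (LINT t|lborel. reduced_integrand N z (Complex (real M) t)) \<le>
      4 * sqrt pi * z powr (- real M) / fact (M - 1) * pi) sequentially"
    using eventually_ge_at_top[of 4]
  proof (rule eventually_mono)
    fix M :: nat assume "M \<ge> 4"
    show "norm (LINT t|lborel. reduced_integrand N z (Complex (real M) t)) \<le>
        4 * sqrt pi * z powr (- real M) / fact (M - 1) * pi"
      by (rule bounded_by_inverse_1_plus_square(2)[OF continuous_reduced_integrand_vertical_line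
          norm_reduced_integrand_right_line[OF z N \<open>M \<ge> 4\<close>]]) (use \<open>M \<ge> 4\<close> of_nat_neq_half_plus_of_nat in auto)
  qed
  define x where "x = inverse z"
  have "(\<lambda>n. inverse (fact n) * x ^ n) \<longlonglongrightarrow> 0"
    by (rule summable_LIMSEQ_zero[OF summable_exp])
  then have "(\<lambda>n. (4 * sqrt pi * pi * x) * (inverse (fact n) * x ^ n)) \<longlonglongrightarrow> 0"
    by (simp add: tendsto_mult_right_zero)
  moreover have x: "z powr (- real m) = x ^ m" for m
    using z by (simp add: x_def powr_minus powr_realpow power_inverse)
  ultimately have "(\<lambda>n. 4 * sqrt pi * z powr (- real (Suc n)) / fact (Suc n - 1) * pi) \<longlonglongrightarrow> 0"
    unfolding x by (simp add: field_simps)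
  then show "(\<lambda>M. 4 * sqrt pi * z powr (- real M) / fact (M - 1) * pi) \<longlonglongrightarrow> 0"
    by (rule filterlim_sequentially_Suc[THEN iffD1])
qed

lemma meijerG_vline_eq_line_integral:
  assumes "c < 0"
  shows "meijerG_vline 0 (N + 1) (1 # replicate N (1/2)) [0] c (of_real z) =
         (LINT t|lborel. reduced_integrand N z (Complex c t)) / (2 * pi)"
proof -
  have "- Complex c t \<notin> \<int>\<^sub>\<le>\<^sub>0" for t
    using assms by (intro not_nonpos_Ints_if_Re_pos) simp
  then have "meijerG_integrand 0 (N + 1) (1 # replicate N (1/2)) [0] (of_real z) (Complex c t) =
      reduced_integrand N z (Complex c t)" for t
    by (rule meijerG_integrand_eq_reduced_integrand)
  then show ?thesis
    unfolding meijerG_vline_def by (simp add: field_simps)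
qed

theorem theorem2:
  fixes N :: nat and z c :: real
  assumes "N \<ge> 1" and "z > 0" and "c < 0"
  shows "(\<lambda>k. complex_of_real (z powr (- 1/2 - real k) *
              (\<Sum>j<N. H_coeff N k j * (ln z) ^ j)))
         sums (complex_of_real (pi powr (real N / 2)) -
               meijerG_vline 0 (N + 1) (1 # replicate N (1/2)) [0] c (complex_of_real z))"
proof -
  define J where "J \<sigma> = (LINT t|lborel. reduced_integrand N z (Complex \<sigma> t))" for \<sigma>
  define P where "P = complex_of_real (pi powr (real N / 2))"
  define G where "G = meijerG_vline 0 (N + 1) (1 # replicate N (1/2)) [0] c (complex_of_real z)"
  define S where "S = (\<lambda>M. \<Sum>k<M. complex_of_real (z powr (- 1/2 - real k) *
      (\<Sum>j<N. H_coeff N k j * (ln z) ^ j)))"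
  have partial_sums: "S M = P - G + J (real M) / (2 * pi)" if "M \<ge> 4" for M
  proof -
    have "J (real M) - J c = 2 * pi * (- P + S M)"
      using reduced_integrand_line_integral_shift[OF assms(2,1,3) that]
        sum_residue_reduced_integrand[OF assms(2,1), of M] by (simp add: J_def P_def S_def)
    moreover have "G = J c / (2 * pi)"
      using meijerG_vline_eq_line_integral[OF assms(3)] by (simp add: G_def J_def)
    ultimately show ?thesis by (simp add: field_simps)
  qed
  have "(\<lambda>M. J (real M)) \<longlonglongrightarrow> 0"
    unfolding J_def by (rule reduced_integrand_right_line_integral_tendsto_0[OF assms(2,1)])
  then have "(\<lambda>M. P - G + J (real M) / (2 * pi)) \<longlonglongrightarrow> P - G"
    using tendsto_add[OF tendsto_const tendsto_divide_zero] by fastforce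
  moreover have "eventually (\<lambda>M. P - G + J (real M) / (2 * pi) = S M) sequentially"
    using eventually_ge_at_top[of 4] by (rule eventually_mono) (simp add: partial_sums)
  ultimately have "S \<longlonglongrightarrow> P - G" by (rule Lim_transform_eventually)
  then show ?thesis unfolding sums_def S_def P_def G_def .
qed

end
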